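(* Let $((A_i,B_i))_{i\in\mathbb N}$ be a strictly increasing sequence of oriented separations of a graph $G$ such that $G[B_i]$ is connected for every $i$, and let $\{C,D\}$ be a separation of $G$ of finite order. If the sequence is exhaustive (i.e. $\bigcap_iB_i=\emptyset$), then there is $I\in\mathbb N$ such that either $(C,D)\le(A_i,B_i)$ for all $i\ge I$, or $(D,C)\le(A_i,B_i)$ for all $i\ge I$.
   Context: A separation of $G$ is an unordered pair $\{A,B\}$ of subsets of $V(G)$ with $A\cup B=V(G)$ and no edge between $A\setminus B$ and $B\setminus A$; its order is $|A\cap B|$. Oriented separations are ordered by $(A,B)\le(C,D)$ iff $A\subseteq C$ and $B\supseteq D$. *)

theory Defs
  imports Main
begin

definition graph :: "'a set \<Rightarrow> ('a \<Rightarrow> 'a \<Rightarrow> bool) \<Rightarrow> bool" where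
  "graph V E \<longleftrightarrow> (\<forall>u v. E u v \<longrightarrow> u \<in> V \<and> v \<in> V \<and> E v u \<and> u \<noteq> v)"

definition separation :: "'a set \<Rightarrow> ('a \<Rightarrow> 'a \<Rightarrow> bool) \<Rightarrow> 'a set \<Rightarrow> 'a set \<Rightarrow> bool" where
  "separation V E A B \<longleftrightarrow> A \<union> B = V \<and> (\<forall>u\<in>A - B. \<forall>v\<in>B - A. \<not> E u v)"

definition sep_le :: "'a set \<times> 'a set \<Rightarrow> 'a set \<times> 'a set \<Rightarrow> bool" where
  "sep_le S T \<longleftrightarrow> fst S \<subseteq> fst T \<and> snd T \<subseteq> snd S"

definition sep_less :: "'a set \<times> 'a set \<Rightarrow> 'a set \<times> 'a set \<Rightarrow> bool" where
  "sep_less S T \<longleftrightarrow> sep_le S T \<and> S \<noteq> T"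

definition induced_connected :: "'a set \<Rightarrow> ('a \<Rightarrow> 'a \<Rightarrow> bool) \<Rightarrow> 'a set \<Rightarrow> bool" where
  "induced_connected V E X \<longleftrightarrow> X \<subseteq> V \<and> X \<noteq> {} \<and>
     (\<forall>x\<in>X. \<forall>y\<in>X. (\<lambda>u v. u \<in> X \<and> v \<in> X \<and> E u v)\<^sup>*\<^sup>* x y)"

end

theory Submission
  imports Defs
begin

text \<open>From some index on, the decreasing sets \<open>B i\<close> miss the finite separator
  \<open>C \<inter> D\<close>. The connected graph \<open>G[B i]\<close> then lies on one side of \<open>{C, D}\<close>,
  which orients \<open>{C, D}\<close> below all later \<open>(A i, B i)\<close>.\<close>

lemma separation_sym:
  assumes "graph V E" and "separation V E C D"
  shows "separation V E D C"
  using assms unfolding graph_def separation_def by blast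

lemma separation_path_stays_in_side:
  assumes "separation V E C D" and "X \<inter> C \<inter> D = {}" and "X \<subseteq> V"
    and "(\<lambda>u v. u \<in> X \<and> v \<in> X \<and> E u v)\<^sup>*\<^sup>* x y" and "x \<in> C - D"
  shows "y \<in> C - D"
  using assms(4,5)
proof (induction rule: rtranclp_induct)
  case (step y z)
  then show ?case using assms(1-3) unfolding separation_def by blast
qed simp

lemma induced_connected_in_one_side:
  assumes "graph V E" and "separation V E C D"
    and "induced_connected V E X" and "X \<inter> C \<inter> D = {}"
  shows "X \<subseteq> C - D \<or> X \<subseteq> D - C"
proof -
  have X: "X \<subseteq> V" "X \<noteq> {}"
    and path: "\<And>x y. x \<in> X \<Longrightarrow> y \<in> X \<Longrightarrow> (\<lambda>u v. u \<in> X \<and> v \<in> X \<and> E u v)\<^sup>*\<^sup>* x y"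
    using assms(3) unfolding induced_connected_def by auto
  obtain x where x: "x \<in> X" using X(2) by blast
  have "x \<in> C - D \<or> x \<in> D - C"
    using x X(1) assms(2,4) unfolding separation_def by blast
  then show ?thesis
  proof
    assume "x \<in> C - D"
    then have "X \<subseteq> C - D"
      using separation_path_stays_in_side[OF assms(2,4) X(1) path[OF x]] by blast
    then show ?thesis ..
  next
    assume "x \<in> D - C"
    moreover have "X \<inter> D \<inter> C = {}" using assms(4) by blast
    ultimately have "X \<subseteq> D - C"
      using separation_path_stays_in_side[OF separation_sym[OF assms(1,2)] _ X(1) path[OF x]]
      by blast
    then show ?thesis ..
  qed
qed

lemma sep_le_if_snd_within_side:
  assumes "separation V E C D" and "A \<union> B = V" and "B \<subseteq> D - C"
  shows "sep_le (C, D) (A, B)"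
  using assms unfolding separation_def sep_le_def by auto

lemma strictly_increasing_seps_antimono_snd:
  fixes i j :: nat
  assumes "\<forall>i j. i < j \<longrightarrow> sep_less (A i, B i) (A j, B j)" and "i \<le> j"
  shows "B j \<subseteq> B i"
proof (cases "i = j")
  case False
  then have "i < j" using assms(2) by simp
  then show ?thesis using assms(1) by (auto simp: sep_less_def sep_le_def)
qed simp

lemma decreasing_exhaustive_eventually_disjoint:
  fixes B :: "nat \<Rightarrow> 'a set"
  assumes "\<And>i j. i \<le> j \<Longrightarrow> B j \<subseteq> B i" and "(\<Inter>i. B i) = {}" and "finite S"
  shows "\<exists>I. B I \<inter> S = {}"
proof -
  have miss: "eventually (\<lambda>i. y \<notin> B i) sequentially" if "y \<in> S" for y
  proof -
    obtain k where "y \<notin> B k" using assms(2) by blast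
    then show ?thesis unfolding eventually_sequentially using assms(1) by blast
  qed
  have "eventually (\<lambda>i. \<forall>y\<in>S. y \<notin> B i) sequentially"
    by (rule eventually_ball_finite[OF assms(3)]) (simp add: miss)
  then obtain I where "\<forall>i\<ge>I. \<forall>y\<in>S. y \<notin> B i"
    unfolding eventually_sequentially by blast
  then show ?thesis by blast
qed

theorem mainTheorem9:
  fixes V :: "'a set" and E :: "'a \<Rightarrow> 'a \<Rightarrow> bool"
    and A B :: "nat \<Rightarrow> 'a set" and C D :: "'a set"
  assumes "graph V E"
    and "\<forall>i. separation V E (A i) (B i)"
    and "\<forall>i j. i < j \<longrightarrow> sep_less (A i, B i) (A j, B j)"
    and "\<forall>i. induced_connected V E (B i)"
    and "separation V E C D"
    and "finite (C \<inter> D)"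
    and "(\<Inter>i. B i) = {}"
  shows "\<exists>I. (\<forall>i\<ge>I. sep_le (C, D) (A i, B i)) \<or> (\<forall>i\<ge>I. sep_le (D, C) (A i, B i))"
proof -
  note antimono = strictly_increasing_seps_antimono_snd[OF assms(3)]
  obtain I where "B I \<inter> (C \<inter> D) = {}"
    using decreasing_exhaustive_eventually_disjoint[OF antimono assms(7,6)] by blast
  then have side: "B I \<subseteq> C - D \<or> B I \<subseteq> D - C"
    using induced_connected_in_one_side[OF assms(1,5)] assms(4) by (simp add: Int_assoc)
  have AB: "A i \<union> B i = V" for i
    using assms(2) by (simp add: separation_def)
  from side show ?thesis
  proof
    assume "B I \<subseteq> C - D"
    then have "\<forall>i\<ge>I. sep_le (D, C) (A i, B i)"
      using antimono
      by (meson order_trans sep_le_if_snd_within_side[OF separation_sym[OF assms(1,5)] AB])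
    then show ?thesis by blast
  next
    assume "B I \<subseteq> D - C"
    then have "\<forall>i\<ge>I. sep_le (C, D) (A i, B i)"
      using antimono by (meson order_trans sep_le_if_snd_within_side[OF assms(5) AB])
    then show ?thesis by blast
  qed
qed

end
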